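(* Let $n\ge2$, $d\ge1$, $r\ge3$ with $n\ge d$ and $dr\equiv0\pmod n$. For every vertex $(a,x)$ of $Q_n(d,r)$, the distance in $Q_n(d,r)$ between $(0_n,0)$ and $(a,x)$ equals $\|a\|+l(a,x)$.
   Context: $\mathbb{Z}_2^n=\{0,1\}^n$ with coordinatewise addition mod 2; $e_i$ is the $i$-th standard basis vector, subscripts read modulo $n$; $\|a\|$ is the Hamming weight of $a$. The recursive cube of rings $Q_n(d,r)$ is the simple graph on $\mathbb{Z}_2^n\times\mathbb{Z}_r$ in which $(a,x)$ is adjacent to $(a+e_{i+dx},x)$ for $1\le i\le d$ and to $(a,x\pm1)$. For $x\in\mathbb{Z}_r$, $D(x)=\{i+dx\bmod n:1\le i\le d\}\subseteq\{1,\dots,n\}$. Elements of $\mathbb{Z}_r$ are represented in $\{0,\dots,r-1\}$. With $s=\|a\|$, an $(a,x)$-sequence is a tuple $\hat x=(x_0,x_1,\dots,x_s,x_{s+1})$ of elements of $\mathbb{Z}_r$ with $x_0=0$, $x_{s+1}=x$, such that the support $\{i: a_i=1\}$ can be enumerated as $i_1,\dots,i_s$ with $i_t\in D(x_t)$ for every $1\le t\le s$. Its length is $l(\hat x)=\sum_{t=1}^{s+1}\min\{|x_t-x_{t-1}|,\,r-|x_t-x_{t-1}|\}$, and $l(a,x)=\min_{\hat x} l(\hat x)$ over all $(a,x)$-sequences. *)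

theory Defs
  imports Main
begin

text \<open>Z_2^n is represented by subsets of {1..n} (a vector a is identified with its
support {i. a_i = 1}); addition of e_i is symmetric difference with {i}, and the
Hamming weight is the cardinality.\<close>

definition sdiff1 :: "nat set \<Rightarrow> nat \<Rightarrow> nat set" where
  "sdiff1 a i = (if i \<in> a then a - {i} else insert i a)"

text \<open>Index i + d x read modulo n, represented in {1..n}.\<close>
definition idx :: "nat \<Rightarrow> nat \<Rightarrow> nat \<Rightarrow> nat \<Rightarrow> nat" where
  "idx n d i x = ((i + d * x + n - 1) mod n) + 1"

definition Dset :: "nat \<Rightarrow> nat \<Rightarrow> nat \<Rightarrow> nat set" where
  "Dset n d x = {idx n d i x | i. 1 \<le> i \<and> i \<le> d}"

definition QV :: "nat \<Rightarrow> nat \<Rightarrow> (nat set \<times> nat) set" where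
  "QV n r = {(a, x). a \<subseteq> {1..n} \<and> x < r}"

definition Qadj :: "nat \<Rightarrow> nat \<Rightarrow> nat \<Rightarrow> nat set \<times> nat \<Rightarrow> nat set \<times> nat \<Rightarrow> bool" where
  "Qadj n d r u v \<longleftrightarrow> u \<in> QV n r \<and> v \<in> QV n r \<and>
     ((snd v = snd u \<and> (\<exists>i. 1 \<le> i \<and> i \<le> d \<and> fst v = sdiff1 (fst u) (idx n d i (snd u))))
      \<or> (fst v = fst u \<and> (snd v = (snd u + 1) mod r \<or> snd u = (snd v + 1) mod r)))"

definition Qwalk :: "nat \<Rightarrow> nat \<Rightarrow> nat \<Rightarrow> (nat set \<times> nat) list \<Rightarrow> bool" where
  "Qwalk n d r p \<longleftrightarrow> p \<noteq> [] \<and> set p \<subseteq> QV n r \<and>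
     (\<forall>j. Suc j < length p \<longrightarrow> Qadj n d r (p ! j) (p ! Suc j))"

definition Qdist :: "nat \<Rightarrow> nat \<Rightarrow> nat \<Rightarrow> nat set \<times> nat \<Rightarrow> nat set \<times> nat \<Rightarrow> nat" where
  "Qdist n d r u v = (LEAST k. \<exists>p. Qwalk n d r p \<and> hd p = u \<and> last p = v \<and> length p = k + 1)"

definition cdist :: "nat \<Rightarrow> nat \<Rightarrow> nat \<Rightarrow> nat" where
  "cdist r x y = (let t = (if x \<le> y then y - x else x - y) in min t (r - t))"

definition is_seq :: "nat \<Rightarrow> nat \<Rightarrow> nat \<Rightarrow> nat set \<Rightarrow> nat \<Rightarrow> (nat \<Rightarrow> nat) \<Rightarrow> bool" where
  "is_seq n d r a x xs \<longleftrightarrow>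
     (let s = card a in
       xs 0 = 0 \<and> xs (s + 1) = x \<and> (\<forall>t \<le> s + 1. xs t < r) \<and>
       (\<exists>f. bij_betw f {1..s} a \<and> (\<forall>t\<in>{1..s}. f t \<in> Dset n d (xs t))))"

definition seq_len :: "nat \<Rightarrow> nat set \<Rightarrow> (nat \<Rightarrow> nat) \<Rightarrow> nat" where
  "seq_len r a xs = (\<Sum>t = 1..card a + 1. cdist r (xs t) (xs (t - 1)))"

definition lmin :: "nat \<Rightarrow> nat \<Rightarrow> nat \<Rightarrow> nat set \<Rightarrow> nat \<Rightarrow> nat" where
  "lmin n d r a x = (LEAST k. \<exists>xs. is_seq n d r a x xs \<and> seq_len r a xs = k)"

end

theory Submission
  imports Defs
begin

text \<open>
Upper bound: an (a,x)-sequence is a route for a walk. Travel around the ring from x_{t-1} to x_t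
along the shorter arc and flip coordinate i_t there, which is allowed since i_t \<in> D(x_t); finally
travel to x. This costs ||a|| flips plus as many ring steps as the length of the sequence.

Lower bound: along any walk from (0_n,0) keep a (b,y)-sequence for the current vertex (b,y) with
||b|| + l \<le> number of steps so far. A ring step changes only the last entry, by cyclic distance 1,
so by the triangle inequality l grows by at most 1. Flipping a new coordinate at position y appends
it with x_{s+1} = y at no cost; flipping an existing coordinate deletes it from the enumeration,
which by the triangle inequality does not increase l while ||b|| drops by one.
\<close>

inductive Qreach :: "nat \<Rightarrow> nat \<Rightarrow> nat \<Rightarrow> nat set \<times> nat \<Rightarrow> nat \<Rightarrow> nat set \<times> nat \<Rightarrow> bool"
  for n d r u where
  Qreach_refl: "u \<in> QV n r \<Longrightarrow> Qreach n d r u 0 u"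
| Qreach_step: "Qreach n d r u k v \<Longrightarrow> Qadj n d r v w \<Longrightarrow> Qreach n d r u (Suc k) w"

lemma Qreach_QV: "Qreach n d r u k v \<Longrightarrow> v \<in> QV n r"
  by (induction rule: Qreach.induct) (auto simp: Qadj_def)

lemma Qwalk_single [simp]: "Qwalk n d r [v] \<longleftrightarrow> v \<in> QV n r"
  by (simp add: Qwalk_def)

lemma Qwalk_snoc:
  assumes "p \<noteq> []"
  shows "Qwalk n d r (p @ [w]) \<longleftrightarrow> Qwalk n d r p \<and> Qadj n d r (last p) w"
proof -
  have last: "(p @ [w]) ! (length p - 1) = last p" "(p @ [w]) ! Suc (length p - 1) = w"
    using assms by (simp_all add: nth_append last_conv_nth)
  have prefix: "(p @ [w]) ! j = p ! j" "(p @ [w]) ! Suc j = p ! Suc j" if "Suc j < length p" for j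
    using that by (simp_all add: nth_append)
  have "(\<forall>j. Suc j < length (p @ [w]) \<longrightarrow> Qadj n d r ((p @ [w]) ! j) ((p @ [w]) ! Suc j)) \<longleftrightarrow>
        (\<forall>j. Suc j < length p \<longrightarrow> Qadj n d r (p ! j) (p ! Suc j)) \<and> Qadj n d r (last p) w"
    (is "?L \<longleftrightarrow> ?R")
  proof
    assume L: ?L
    have "Qadj n d r (p ! j) (p ! Suc j)" if "Suc j < length p" for j
      using L[rule_format, of j] that prefix[OF that] by simp
    moreover have "Suc (length p - 1) < length (p @ [w])"
      using assms by simp
    with L have "Qadj n d r (last p) w"
      using last by metis
    ultimately show ?R by blast
  next
    assume R: ?R
    show ?L
    proof (intro allI impI)
      fix j assume j: "Suc j < length (p @ [w])"
      show "Qadj n d r ((p @ [w]) ! j) ((p @ [w]) ! Suc j)"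
      proof (cases "Suc j < length p")
        case True
        with R prefix show ?thesis by simp
      next
        case False
        with j have "j = length p - 1" by simp
        with R last show ?thesis by simp
      qed
    qed
  qed
  moreover have "Qadj n d r (last p) w \<Longrightarrow> w \<in> QV n r"
    by (simp add: Qadj_def)
  ultimately show ?thesis
    using assms by (auto simp: Qwalk_def)
qed

lemma Qreach_iff_Qwalk:
  "Qreach n d r u k v \<longleftrightarrow> (\<exists>p. Qwalk n d r p \<and> hd p = u \<and> last p = v \<and> length p = Suc k)"
proof
  assume "Qreach n d r u k v"
  then show "\<exists>p. Qwalk n d r p \<and> hd p = u \<and> last p = v \<and> length p = Suc k"
  proof (induction rule: Qreach.induct)
    case Qreach_refl
    then show ?case by (intro exI[of _ "[u]"]) simp
  next
    case (Qreach_step k v w)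
    then obtain p where "Qwalk n d r p" "hd p = u" "last p = v" "length p = Suc k" by blast
    moreover from \<open>length p = Suc k\<close> have "p \<noteq> []" by auto
    ultimately show ?case
      using Qreach_step.hyps(2) by (intro exI[of _ "p @ [w]"]) (auto simp: Qwalk_snoc)
  qed
next
  assume "\<exists>p. Qwalk n d r p \<and> hd p = u \<and> last p = v \<and> length p = Suc k"
  then obtain p where "Qwalk n d r p" "hd p = u" "last p = v" "length p = Suc k" by blast
  then show "Qreach n d r u k v"
  proof (induction p arbitrary: k v rule: rev_induct)
    case Nil
    then show ?case by simp
  next
    case (snoc w p)
    show ?case
    proof (cases "p = []")
      case True
      with snoc.prems show ?thesis by (auto intro: Qreach_refl)
    next
      case False
      then obtain k' where "k = Suc k'" "length p = Suc k'"
        using snoc.prems(4) by (cases p) auto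
      with False snoc.prems have "Qwalk n d r p" "Qadj n d r (last p) w" "hd p = u"
        by (auto simp: Qwalk_snoc)
      with snoc.IH \<open>length p = Suc k'\<close> have "Qreach n d r u k' (last p)" by blast
      with \<open>Qadj n d r (last p) w\<close> \<open>k = Suc k'\<close> snoc.prems(3) show ?thesis
        by (auto intro: Qreach_step)
    qed
  qed
qed

lemma Qdist_eq_Least_Qreach: "Qdist n d r u v = (LEAST k. Qreach n d r u k v)"
  by (simp add: Qdist_def Qreach_iff_Qwalk)

lemma cdist_self [simp]: "cdist r x x = 0"
  by (simp add: cdist_def)

lemma cdist_commute: "cdist r x y = cdist r y x"
  by (simp add: cdist_def)

lemma min_cyclic_triangle:
  fixes a b c r :: nat
  assumes "a \<le> r" "b \<le> r" "c \<le> r" "a = b + c \<or> b = a + c \<or> c = a + b"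
  shows "min a (r - a) \<le> min b (r - b) + min c (r - c)"
  unfolding min_add_distrib_left min_add_distrib_right min.bounded_iff min_le_iff_disj
  using assms by arith

lemma cdist_triangle:
  assumes "x < r" "y < r" "z < r"
  shows "cdist r x z \<le> cdist r x y + cdist r y z"
  unfolding cdist_def Let_def
  by (rule min_cyclic_triangle) (use assms in auto)

lemma cdist_Suc_mod_le:
  assumes "y < r"
  shows "cdist r ((y + 1) mod r) y \<le> 1"
proof (cases "y + 1 < r")
  case False
  with assms have "y + 1 = r" by simp
  then show ?thesis by (simp add: cdist_def Let_def)
qed (simp add: cdist_def)

lemma cdist_mod_cases:
  assumes "x < r" "y < r"
  shows "(y + cdist r x y) mod r = x \<or> (x + cdist r x y) mod r = y"
proof -
  have shift: "(u + (r - (u - v))) mod r = v" if "v \<le> u" "u < r" for u v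
  proof -
    have "u + (r - (u - v)) = v + r" using that by simp
    then show ?thesis using that by simp
  qed
  show ?thesis
  proof (cases "y \<le> x")
    case True
    then have "cdist r x y = min (x - y) (r - (x - y))" by (simp add: cdist_def)
    then show ?thesis
      using True assms shift[of y x] by (auto simp: min_def)
  next
    case False
    then have "cdist r x y = min (y - x) (r - (y - x))" by (simp add: cdist_def)
    then show ?thesis
      using False assms shift[of x y] by (auto simp: min_def)
  qed
qed

lemma Qreach_ring_forward:
  assumes "Qreach n d r u k (b, y)"
  shows "Qreach n d r u (k + j) (b, (y + j) mod r)"
proof (induction j)
  case 0
  from Qreach_QV[OF assms] have "y < r" by (simp add: QV_def)
  with assms show ?case by simp
next
  case (Suc j)
  from Qreach_QV[OF assms] have "b \<subseteq> {1..n}" "0 < r" by (auto simp: QV_def)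
  then have "Qadj n d r (b, (y + j) mod r) (b, (y + Suc j) mod r)"
    by (simp add: Qadj_def QV_def mod_Suc_eq)
  with Suc.IH show ?case by (auto intro: Qreach_step)
qed

lemma Qreach_ring_backward:
  assumes "Qreach n d r u k (b, y)" "w < r" "(w + j) mod r = y"
  shows "Qreach n d r u (k + j) (b, w)"
  using assms(2,3)
proof (induction j arbitrary: w)
  case 0
  with assms(1) show ?case by simp
next
  case (Suc j)
  from Qreach_QV[OF assms(1)] have "b \<subseteq> {1..n}" "0 < r" by (auto simp: QV_def)
  define w' where "w' = (w + 1) mod r"
  have "w' < r" using \<open>0 < r\<close> by (simp add: w'_def)
  moreover have "(w' + j) mod r = y"
    using Suc.prems(2) by (simp add: w'_def mod_add_left_eq)
  ultimately have "Qreach n d r u (k + j) (b, w')" by (rule Suc.IH)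
  moreover have "Qadj n d r (b, w') (b, w)"
    using \<open>b \<subseteq> {1..n}\<close> \<open>w' < r\<close> Suc.prems(1) by (simp add: Qadj_def QV_def w'_def)
  ultimately show ?case by (auto intro: Qreach_step)
qed

lemma Qreach_ring_move:
  assumes "Qreach n d r u k (b, y)" "z < r"
  shows "Qreach n d r u (k + cdist r z y) (b, z)"
proof -
  from Qreach_QV[OF assms(1)] have "y < r" by (simp add: QV_def)
  with assms(2) consider "(y + cdist r z y) mod r = z" | "(z + cdist r z y) mod r = y"
    using cdist_mod_cases by blast
  then show ?thesis
  proof cases
    case 1
    with Qreach_ring_forward[OF assms(1)] show ?thesis by metis
  next
    case 2
    with Qreach_ring_backward[OF assms] show ?thesis .
  qed
qed

lemma is_seqI:
  assumes "xs 0 = 0" "xs (card a + 1) = x" "\<And>t. t \<le> card a + 1 \<Longrightarrow> xs t < r"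
    and "bij_betw f {1..card a} a" "\<And>t. t \<in> {1..card a} \<Longrightarrow> f t \<in> Dset n d (xs t)"
  shows "is_seq n d r a x xs"
  using assms unfolding is_seq_def Let_def by blast

lemma is_seqE:
  assumes "is_seq n d r a x xs"
  obtains f where "xs 0 = 0" "xs (card a + 1) = x" "\<And>t. t \<le> card a + 1 \<Longrightarrow> xs t < r"
    and "bij_betw f {1..card a} a" "\<And>t. t \<in> {1..card a} \<Longrightarrow> f t \<in> Dset n d (xs t)"
  using assms unfolding is_seq_def Let_def by blast

lemma seq_len_Suc:
  "seq_len r a xs = (\<Sum>t = 1..card a. cdist r (xs t) (xs (t - 1))) + cdist r (xs (card a + 1)) (xs (card a))"
  by (simp add: seq_len_def)

lemma Dset_I: "1 \<le> j \<Longrightarrow> j \<le> d \<Longrightarrow> idx n d j y \<in> Dset n d y"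
  unfolding Dset_def by blast

lemma Dset_E:
  assumes "i \<in> Dset n d y"
  obtains j where "1 \<le> j" "j \<le> d" "i = idx n d j y"
  using assms unfolding Dset_def by blast

lemma mem_Dset_div:
  assumes "d \<ge> 1" "1 \<le> i" "i \<le> n"
  shows "i \<in> Dset n d ((i - 1) div d)"
proof -
  have e: "(i - 1) mod d + 1 + d * ((i - 1) div d) + n - 1 = i - 1 + n"
    using mult_div_mod_eq[of d "i - 1"] by linarith
  have "(i - 1 + n) mod n = i - 1" using assms(2,3) by (simp only: mod_add_self2) simp
  then have "idx n d ((i - 1) mod d + 1) ((i - 1) div d) = i"
    using assms(2) by (simp only: idx_def e)
  moreover have "1 \<le> (i - 1) mod d + 1" "(i - 1) mod d + 1 \<le> d"
    using assms(1) by (auto simp: Suc_leI)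
  ultimately show ?thesis by (metis Dset_I)
qed

lemma is_seq_exists:
  assumes "d \<ge> 1" "n \<le> d * r" "a \<subseteq> {1..n}" "x < r"
  shows "\<exists>xs. is_seq n d r a x xs"
proof -
  from assms(3) have "finite a" by (rule finite_subset) simp
  then obtain f where bij: "bij_betw f {1..card a} a"
    using ex_bij_betw_nat_finite_1 by blast
  define xs where "xs t = (if t = 0 then 0 else if t \<le> card a then (f t - 1) div d else x)" for t
  have f_range: "f t \<in> {1..n}" if "t \<in> {1..card a}" for t
    using bij_betw_apply[OF bij that] assms(3) by blast
  have "(i - 1) div d < r" if "i \<in> {1..n}" for i
  proof -
    have "i - 1 < d * r" using that assms(2) by auto
    then show ?thesis using assms(1) by (simp add: div_less_iff_less_mult mult.commute)
  qed
  with f_range assms(4) have "xs t < r" for t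
    by (simp add: xs_def)
  moreover have "f t \<in> Dset n d (xs t)" if "t \<in> {1..card a}" for t
    using that f_range[OF that] mem_Dset_div[OF assms(1)] by (simp add: xs_def)
  ultimately have "is_seq n d r a x xs"
    by (intro is_seqI[OF _ _ _ bij]) (simp_all add: xs_def)
  then show ?thesis by blast
qed

lemma Qreach_flip_insert:
  assumes "Qreach n d r u k (b, y)" "i \<in> Dset n d y" "i \<notin> b" "i \<in> {1..n}"
  shows "Qreach n d r u (Suc k) (insert i b, y)"
proof -
  from assms(2) obtain j where "1 \<le> j" "j \<le> d" "i = idx n d j y" by (rule Dset_E)
  moreover have "(b, y) \<in> QV n r" by (rule Qreach_QV[OF assms(1)])
  ultimately have "Qadj n d r (b, y) (insert i b, y)"
    using assms(3,4) by (auto simp: Qadj_def QV_def sdiff1_def)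
  with assms(1) show ?thesis by (rule Qreach_step)
qed

lemma Qreach_of_is_seq:
  assumes "is_seq n d r a x xs" "a \<subseteq> {1..n}"
  shows "Qreach n d r ({}, 0) (card a + seq_len r a xs) (a, x)"
proof -
  let ?s = "card a"
  from assms(1) obtain f where x0: "xs 0 = 0" and xe: "xs (?s + 1) = x"
    and xr: "\<And>t. t \<le> ?s + 1 \<Longrightarrow> xs t < r"
    and bij: "bij_betw f {1..?s} a" and fD: "\<And>t. t \<in> {1..?s} \<Longrightarrow> f t \<in> Dset n d (xs t)"
    using is_seqE by blast
  have prefix: "Qreach n d r ({}, 0) (t + (\<Sum>\<tau> = 1..t. cdist r (xs \<tau>) (xs (\<tau> - 1))))
      (f ` {1..t}, xs t)" if "t \<le> ?s" for t
    using that
  proof (induction t)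
    case 0
    have "({}, 0) \<in> QV n r" using xr[of 0] by (simp add: QV_def)
    with x0 show ?case by (auto intro: Qreach_refl)
  next
    case (Suc t)
    have "f (Suc t) \<notin> f ` {1..t}"
      using Suc.prems bij_betw_imp_inj_on[OF bij] by (auto dest: inj_onD)
    moreover have "f (Suc t) \<in> {1..n}"
      using Suc.prems bij_betw_apply[OF bij, of "Suc t"] assms(2) by auto
    moreover have "Qreach n d r ({}, 0) (t + (\<Sum>\<tau> = 1..t. cdist r (xs \<tau>) (xs (\<tau> - 1)))
        + cdist r (xs (Suc t)) (xs t)) (f ` {1..t}, xs (Suc t))"
      using Suc Qreach_ring_move xr[of "Suc t"] by simp
    ultimately have "Qreach n d r ({}, 0) (Suc (t + (\<Sum>\<tau> = 1..t. cdist r (xs \<tau>) (xs (\<tau> - 1)))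
        + cdist r (xs (Suc t)) (xs t))) (insert (f (Suc t)) (f ` {1..t}), xs (Suc t))"
      using fD[of "Suc t"] Suc.prems by (intro Qreach_flip_insert) auto
    then show ?case by (simp add: atLeastAtMostSuc_conv ac_simps)
  qed
  have "f ` {1..?s} = a" using bij by (simp add: bij_betw_def)
  with prefix[of ?s] Qreach_ring_move xr[of "?s + 1"]
  have "Qreach n d r ({}, 0) (?s + (\<Sum>\<tau> = 1..?s. cdist r (xs \<tau>) (xs (\<tau> - 1)))
      + cdist r (xs (?s + 1)) (xs ?s)) (a, xs (?s + 1))"
    by simp
  with xe show ?thesis by (simp add: seq_len_Suc add.assoc)
qed

lemma is_seq_change_last:
  assumes "is_seq n d r b y xs" "z < r"
  shows "\<exists>xs'. is_seq n d r b z xs' \<and> seq_len r b xs' \<le> seq_len r b xs + cdist r z y"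
proof -
  let ?s = "card b"
  from assms(1) obtain f where x0: "xs 0 = 0" and xe: "xs (?s + 1) = y"
    and xr: "\<And>t. t \<le> ?s + 1 \<Longrightarrow> xs t < r"
    and bij: "bij_betw f {1..?s} b" and fD: "\<And>t. t \<in> {1..?s} \<Longrightarrow> f t \<in> Dset n d (xs t)"
    using is_seqE by blast
  define xs' where "xs' = xs(?s + 1 := z)"
  have "is_seq n d r b z xs'"
    using x0 xr assms(2) fD by (intro is_seqI[OF _ _ _ bij]) (auto simp: xs'_def)
  moreover have "(\<Sum>t = 1..?s. cdist r (xs' t) (xs' (t - 1))) = (\<Sum>t = 1..?s. cdist r (xs t) (xs (t - 1)))"
    by (rule sum.cong) (auto simp: xs'_def)
  moreover have "cdist r z (xs ?s) \<le> cdist r z y + cdist r y (xs ?s)"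
    using cdist_triangle assms(2) xr[of ?s] xr[of "?s + 1"] xe by simp
  ultimately show ?thesis
    using xe by (intro exI[of _ xs']) (simp add: seq_len_Suc xs'_def)
qed

lemma is_seq_insert:
  assumes "is_seq n d r b y xs" "i \<in> Dset n d y" "i \<notin> b" "finite b"
  shows "\<exists>xs'. is_seq n d r (insert i b) y xs' \<and> seq_len r (insert i b) xs' = seq_len r b xs"
proof -
  let ?s = "card b"
  from assms(1) obtain f where x0: "xs 0 = 0" and xe: "xs (?s + 1) = y"
    and xr: "\<And>t. t \<le> ?s + 1 \<Longrightarrow> xs t < r"
    and bij: "bij_betw f {1..?s} b" and fD: "\<And>t. t \<in> {1..?s} \<Longrightarrow> f t \<in> Dset n d (xs t)"
    using is_seqE by blast
  have card: "card (insert i b) = ?s + 1" using assms(3,4) by simp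
  define xs' where "xs' = xs(?s + 2 := y)"
  define f' where "f' = f(?s + 1 := i)"
  have "bij_betw f' ({1..?s} \<union> {?s + 1}) (b \<union> {f' (?s + 1)})"
  proof (rule notIn_Un_bij_betw)
    show "bij_betw f' {1..?s} b"
      using bij by (rule bij_betw_cong[THEN iffD1, rotated]) (simp add: f'_def)
  qed (use assms(3) in \<open>auto simp: f'_def\<close>)
  moreover have "{1..?s} \<union> {?s + 1} = {1..card (insert i b)}" "b \<union> {f' (?s + 1)} = insert i b"
    using card by (auto simp: f'_def)
  ultimately have "bij_betw f' {1..card (insert i b)} (insert i b)" by simp
  moreover have "f' t \<in> Dset n d (xs' t)" if "t \<in> {1..card (insert i b)}" for t
    using that assms(2) xe fD card by (cases "t = ?s + 1") (auto simp: f'_def xs'_def)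
  moreover have "xs' t < r" if "t \<le> card (insert i b) + 1" for t
    using that xr[of t] xr[of "?s + 1"] xe card by (auto simp: xs'_def)
  ultimately have "is_seq n d r (insert i b) y xs'"
    using x0 card by (intro is_seqI) (auto simp: xs'_def)
  moreover have "(\<Sum>t = 1..?s + 1. cdist r (xs' t) (xs' (t - 1))) = (\<Sum>t = 1..?s + 1. cdist r (xs t) (xs (t - 1)))"
    by (rule sum.cong) (auto simp: xs'_def)
  ultimately show ?thesis
    using xe card by (intro exI[of _ xs']) (simp add: seq_len_Suc[of r "insert i b"] seq_len_def xs'_def)
qed

definition skip_index :: "nat \<Rightarrow> nat \<Rightarrow> nat" where
  "skip_index k t = (if t < k then t else Suc t)"

lemma bij_betw_skip_index:
  assumes "1 \<le> k" "k \<le> Suc m"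
  shows "bij_betw (skip_index k) {1..m} ({1..Suc m} - {k})"
proof (rule bij_betw_imageI)
  show "inj_on (skip_index k) {1..m}"
    by (auto simp: inj_on_def skip_index_def split: if_splits)
  have "u \<in> skip_index k ` {1..m}" if "u \<in> {1..Suc m} - {k}" for u
  proof (cases "u < k")
    case True
    with that assms show ?thesis by (intro image_eqI[of _ _ u]) (auto simp: skip_index_def)
  next
    case False
    with that assms show ?thesis by (intro image_eqI[of _ _ "u - 1"]) (auto simp: skip_index_def)
  qed
  moreover have "skip_index k ` {1..m} \<subseteq> {1..Suc m} - {k}"
    using assms by (auto simp: skip_index_def)
  ultimately show "skip_index k ` {1..m} = {1..Suc m} - {k}" by blast
qed

lemma sum_cdist_skip_index_le:
  assumes "1 \<le> k" "k \<le> m" "\<And>t. t \<le> Suc m \<Longrightarrow> F t < r"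
  shows "(\<Sum>t = 1..m. cdist r (F (skip_index k t)) (F (skip_index k (t - 1))))
    \<le> (\<Sum>t = 1..Suc m. cdist r (F t) (F (t - 1)))"
  using assms(2,3)
proof (induction m rule: dec_induct)
  case base
  obtain k' where k: "k = Suc k'" using assms(1) by (cases k) auto
  have "(\<Sum>t = 1..k'. cdist r (F (skip_index k t)) (F (skip_index k (t - 1))))
      = (\<Sum>t = 1..k'. cdist r (F t) (F (t - 1)))"
    by (rule sum.cong) (auto simp: k skip_index_def)
  moreover have "cdist r (F (Suc k)) (F k') \<le> cdist r (F (Suc k)) (F k) + cdist r (F k) (F k')"
    using base.prems k by (intro cdist_triangle) auto
  ultimately show ?case by (simp add: k skip_index_def)
next
  case (step m)
  have "(\<Sum>t = 1..m. cdist r (F (skip_index k t)) (F (skip_index k (t - 1))))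
      \<le> (\<Sum>t = 1..Suc m. cdist r (F t) (F (t - 1)))"
    using step.prems by (intro step.IH) simp
  moreover have "skip_index k (Suc m) = Suc (Suc m)" "skip_index k m = Suc m"
    using step.hyps by (simp_all add: skip_index_def)
  ultimately show ?case by simp
qed

lemma is_seq_remove:
  assumes "is_seq n d r b y xs" "i \<in> b" "finite b"
  shows "\<exists>xs'. is_seq n d r (b - {i}) y xs' \<and> seq_len r (b - {i}) xs' \<le> seq_len r b xs"
proof -
  let ?s = "card b"
  from assms(1) obtain f where x0: "xs 0 = 0" and xe: "xs (?s + 1) = y"
    and xr: "\<And>t. t \<le> ?s + 1 \<Longrightarrow> xs t < r"
    and bij: "bij_betw f {1..?s} b" and fD: "\<And>t. t \<in> {1..?s} \<Longrightarrow> f t \<in> Dset n d (xs t)"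
    using is_seqE by blast
  obtain m where card: "?s = Suc m" using assms(2,3) by (cases ?s) auto
  then have card_remove: "card (b - {i}) = m" using assms(2,3) by simp
  from assms(2) bij have "i \<in> f ` {1..?s}" by (simp add: bij_betw_def)
  then obtain k where k: "k \<in> {1..?s}" "f k = i" by blast
  have "bij_betw f ({1..?s} - {k}) (b - {i})"
    using bij k assms(2) by (intro bij_betw_DiffI) auto
  with bij_betw_skip_index[of k m] k card
  have bij': "bij_betw (f \<circ> skip_index k) {1..m} (b - {i})"
    by (auto intro: bij_betw_trans)
  define xs' where "xs' = xs \<circ> skip_index k"
  have "is_seq n d r (b - {i}) y xs'"
  proof (rule is_seqI[OF _ _ _ bij'[folded card_remove]])
    show "xs' 0 = 0" "xs' (card (b - {i}) + 1) = y"
      using x0 xe k card card_remove by (auto simp: xs'_def skip_index_def)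
    show "xs' t < r" if "t \<le> card (b - {i}) + 1" for t
      using that xr card card_remove by (auto simp: xs'_def skip_index_def)
    show "(f \<circ> skip_index k) t \<in> Dset n d (xs' t)" if "t \<in> {1..card (b - {i})}" for t
      using that fD bij_betw_apply[OF bij_betw_skip_index[of k m]] k card card_remove
      by (auto simp: xs'_def)
  qed
  moreover have "seq_len r (b - {i}) xs' \<le> seq_len r b xs"
    using sum_cdist_skip_index_le[of k "Suc m" xs r] k card card_remove xr
    by (simp add: seq_len_def xs'_def)
  ultimately show ?thesis by blast
qed

lemma is_seq_Qadj_step:
  assumes xs: "is_seq n d r b y xs" and adj: "Qadj n d r (b, y) (c, z)"
  shows "\<exists>xs'. is_seq n d r c z xs' \<and> card c + seq_len r c xs' \<le> card b + seq_len r b xs + 1"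
proof -
  from adj have "finite b" "y < r" "z < r"
    by (auto simp: Qadj_def QV_def intro: finite_subset)
  from adj consider
      (ring) "c = b" "z = (y + 1) mod r \<or> y = (z + 1) mod r"
    | (flip) j where "z = y" "1 \<le> j" "j \<le> d" "c = sdiff1 b (idx n d j y)"
    by (auto simp: Qadj_def)
  then show ?thesis
  proof cases
    case ring
    from ring(2) \<open>y < r\<close> \<open>z < r\<close> have "cdist r z y \<le> 1"
      using cdist_Suc_mod_le cdist_commute by metis
    moreover obtain xs' where "is_seq n d r b z xs'" "seq_len r b xs' \<le> seq_len r b xs + cdist r z y"
      using is_seq_change_last[OF xs \<open>z < r\<close>] by blast
    ultimately show ?thesis
      using ring(1) by (intro exI[of _ xs']) auto
  next
    case flip
    let ?i = "idx n d j y"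
    show ?thesis
    proof (cases "?i \<in> b")
      case True
      then have "c = b - {?i}" using flip(4) by (simp add: sdiff1_def)
      moreover obtain xs' where "is_seq n d r (b - {?i}) y xs'" "seq_len r (b - {?i}) xs' \<le> seq_len r b xs"
        using is_seq_remove[OF xs True \<open>finite b\<close>] by blast
      moreover have "card (b - {?i}) \<le> card b" by (rule card_Diff1_le)
      ultimately show ?thesis
        using flip(1) by (intro exI[of _ xs']) auto
    next
      case False
      then have "c = insert ?i b" using flip(4) by (simp add: sdiff1_def)
      moreover obtain xs' where "is_seq n d r (insert ?i b) y xs'" "seq_len r (insert ?i b) xs' = seq_len r b xs"
        using is_seq_insert[OF xs Dset_I[OF flip(2,3)] False \<open>finite b\<close>] by blast
      moreover have "card (insert ?i b) = Suc (card b)" using \<open>finite b\<close> False by simp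
      ultimately show ?thesis
        using flip(1) by (intro exI[of _ xs']) auto
    qed
  qed
qed

lemma is_seq_of_Qreach:
  assumes "Qreach n d r ({}, 0) k v"
  shows "\<exists>xs. is_seq n d r (fst v) (snd v) xs \<and> card (fst v) + seq_len r (fst v) xs \<le> k"
  using assms
proof (induction rule: Qreach.induct)
  case Qreach_refl
  have "is_seq n d r {} 0 (\<lambda>_. 0)"
    using Qreach_refl by (intro is_seqI[of _ _ _ _ id]) (auto simp: QV_def)
  moreover have "seq_len r {} (\<lambda>_. 0) = 0" by (simp add: seq_len_def)
  ultimately show ?case by auto
next
  case (Qreach_step k v w)
  then obtain xs where "is_seq n d r (fst v) (snd v) xs" "card (fst v) + seq_len r (fst v) xs \<le> k"
    by blast
  with is_seq_Qadj_step[of n d r "fst v" "snd v" xs "fst w" "snd w"] Qreach_step.hyps(2)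
  show ?case by fastforce
qed

lemma lmin_le: "is_seq n d r a x xs \<Longrightarrow> lmin n d r a x \<le> seq_len r a xs"
  unfolding lmin_def by (rule Least_le) blast

lemma lmin_attained:
  assumes "is_seq n d r a x xs"
  obtains xs' where "is_seq n d r a x xs'" "seq_len r a xs' = lmin n d r a x"
proof -
  from assms have "\<exists>k xs. is_seq n d r a x xs \<and> seq_len r a xs = k" by blast
  from LeastI_ex[OF this] show ?thesis using that[unfolded lmin_def] by blast
qed

theorem mainTheorem6:
  fixes n d r :: nat and a :: "nat set" and x :: nat
  assumes "n \<ge> 2" "d \<ge> 1" "r \<ge> 3" "n \<ge> d" "(d * r) mod n = 0"
    and "(a, x) \<in> QV n r"
  shows "Qdist n d r ({}, 0) (a, x) = card a + lmin n d r a x"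
proof -
  from assms(6) have a: "a \<subseteq> {1..n}" and "x < r" by (auto simp: QV_def)
  from assms(2,3,5) have "n \<le> d * r" by (auto intro: dvd_imp_le)
  with assms(2) a \<open>x < r\<close> obtain xs where "is_seq n d r a x xs"
    using is_seq_exists by blast
  then obtain xs' where xs': "is_seq n d r a x xs'" "seq_len r a xs' = lmin n d r a x"
    by (rule lmin_attained)
  show ?thesis
    unfolding Qdist_eq_Least_Qreach
  proof (rule Least_equality)
    show "Qreach n d r ({}, 0) (card a + lmin n d r a x) (a, x)"
      using Qreach_of_is_seq[OF xs'(1) a] xs'(2) by simp
    show "card a + lmin n d r a x \<le> k" if "Qreach n d r ({}, 0) k (a, x)" for k
      using is_seq_of_Qreach[OF that] lmin_le by fastforce
  qed
qed

end
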